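(* Let $M\subseteq[r]^d$ be a dot array satisfying (P2') and (P3). If $\mathbf x,\mathbf y\in M$ and $i\ne j$ are indices with $x_i>y_i$ and $x_j=y_j$, then there exists $\mathbf b\in M$ with $b_i=y_i$ and $b_j>y_j$.
   Context: $[r]=\{0,\dots,r\}$ and a dot array is a subset of $[r]^d$; for an element $\mathbf w$, $w_i$ (or $w_{k,i}$ for $\mathbf w_k$) denotes its $i$-th coordinate. (P2') for any distinct $i,j\in\{1,\dots,d\}$ and all integers $r_i,r_j\ge0$ with $r_i+r_j=r$, there are $\mathbf z,\mathbf w_1,\dots,\mathbf w_{r_i},\mathbf u_1,\dots,\mathbf u_{r_j}\in M$ with: (a) $w_{1,i}<\dots<w_{r_i,i}<z_i$; (b) $u_{1,j}<\dots<u_{r_j,j}<z_j$; (c) $u_{k,j}<w_{k',j}$ for all $k,k'$. (P3) every set $S$ of $r+2$ elements of $M$ contains a subset $S'$ (with at least two elements) such that for every $1\le i\le d$ the value $\min\{x_i:\mathbf x\in S'\}$ is attained by at least two elements of $S'$. *)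

theory Defs
  imports Main
begin

text \<open>Points of [r]^d are modelled as functions nat \<Rightarrow> nat, coordinates indexed
by 1..d, with value 0 outside 1..d (so that they are determined by their coordinates).\<close>

definition grid :: "nat \<Rightarrow> nat \<Rightarrow> (nat \<Rightarrow> nat) set" where
  "grid r d = {x. (\<forall>i\<in>{1..d}. x i \<le> r) \<and> (\<forall>i. i \<notin> {1..d} \<longrightarrow> x i = 0)}"

definition dot_array :: "nat \<Rightarrow> nat \<Rightarrow> (nat \<Rightarrow> nat) set \<Rightarrow> bool" where
  "dot_array r d M \<longleftrightarrow> M \<subseteq> grid r d"

definition P2' :: "nat \<Rightarrow> nat \<Rightarrow> (nat \<Rightarrow> nat) set \<Rightarrow> bool" where
  "P2' r d M \<longleftrightarrow>
    (\<forall>i\<in>{1..d}. \<forall>j\<in>{1..d}. i \<noteq> j \<longrightarrow> (\<forall>ri rj. ri + rj = r \<longrightarrow>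
      (\<exists>z w u. z \<in> M \<and> (\<forall>k\<in>{1..ri}. w k \<in> M) \<and> (\<forall>k\<in>{1..rj}. u k \<in> M) \<and>
        (\<forall>k\<in>{1..ri}. \<forall>k'\<in>{1..ri}. k < k' \<longrightarrow> w k i < w k' i) \<and>
        (\<forall>k\<in>{1..ri}. w k i < z i) \<and>
        (\<forall>k\<in>{1..rj}. \<forall>k'\<in>{1..rj}. k < k' \<longrightarrow> u k j < u k' j) \<and>
        (\<forall>k\<in>{1..rj}. u k j < z j) \<and>
        (\<forall>k\<in>{1..rj}. \<forall>k'\<in>{1..ri}. u k j < w k' j))))"

definition P3 :: "nat \<Rightarrow> nat \<Rightarrow> (nat \<Rightarrow> nat) set \<Rightarrow> bool" where
  "P3 r d M \<longleftrightarrow>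
    (\<forall>S. S \<subseteq> M \<and> finite S \<and> card S = r + 2 \<longrightarrow>
      (\<exists>S'. S' \<subseteq> S \<and> card S' \<ge> 2 \<and>
        (\<forall>i\<in>{1..d}. \<exists>a\<in>S'. \<exists>b\<in>S'. a \<noteq> b \<and>
            a i = Min ((\<lambda>x. x i) ` S') \<and> b i = Min ((\<lambda>x. x i) ` S'))))"

end

theory Submission
  imports Defs
begin

text \<open>Let \<open>c = y j\<close>. Applying (P2') with \<open>r\<^sub>i = 0\<close> yields \<open>c\<close> points of \<open>M\<close> with pairwise distinct
\<open>j\<close>-coordinates below \<open>c\<close>; applying it with \<open>r\<^sub>j = c + 1\<close> yields \<open>r - c\<close> points with \<open>j\<close>-coordinates
above \<open>c\<close> and pairwise distinct \<open>i\<close>-coordinates. Together with \<open>x\<close> and \<open>y\<close> these are \<open>r + 2\<close>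
points, so (P3) gives a subset \<open>S'\<close> whose coordinatewise minima are all attained twice. The
\<open>j\<close>-minimum of \<open>S'\<close> can neither lie below \<open>c\<close> (distinct values there) nor above \<open>c\<close> (then \<open>S'\<close>
lies among the high points and the \<open>i\<close>-minimum could not be attained twice), so it is attained
by \<open>x\<close> and \<open>y\<close>.
The \<open>i\<close>-minimum is then at most \<open>y i < x i\<close>, and being attained twice it is attained by \<open>y\<close>
and by a high point \<open>b\<close>, which is the required point.\<close>

lemma strict_mono_on_nat_gap:
  fixes f :: "nat \<Rightarrow> nat"
  assumes "strict_mono_on A f" and "{m..n} \<subseteq> A" and "m \<le> n"
  shows "f m + (n - m) \<le> f n"
  using assms(3,2)
proof (induction n rule: dec_induct)
  case base
  then show ?case by simp
next
  case (step k)
  have "k \<in> A" "Suc k \<in> A" "{m..k} \<subseteq> A"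
    using step.prems step.hyps(1) by auto
  then have "f k < f (Suc k)" "f m + (k - m) \<le> f k"
    using strict_mono_onD[OF assms(1)] step.IH by auto
  then show ?case using step.hyps(1) by (simp add: Suc_diff_le)
qed

lemma dot_array_coordinate_le:
  assumes "dot_array r d M" and "p \<in> M" and "k \<in> {1..d}"
  shows "p k \<le> r"
  using assms unfolding dot_array_def grid_def by blast

lemma P2'E:
  assumes "P2' r d M" and "i \<in> {1..d}" and "j \<in> {1..d}" and "i \<noteq> j" and "ri + rj = r"
  obtains z w u where "z \<in> M" and "w ` {1..ri} \<subseteq> M" and "u ` {1..rj} \<subseteq> M"
    and "strict_mono_on {1..ri} (\<lambda>k. w k i)" and "\<forall>k\<in>{1..ri}. w k i < z i"
    and "strict_mono_on {1..rj} (\<lambda>k. u k j)" and "\<forall>k\<in>{1..rj}. u k j < z j"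
    and "\<forall>k\<in>{1..rj}. \<forall>k'\<in>{1..ri}. u k j < w k' j"
proof -
  from assms(1)[unfolded P2'_def, rule_format, OF assms(2-5)]
  obtain z w u where "z \<in> M" and "\<forall>k\<in>{1..ri}. w k \<in> M" and "\<forall>k\<in>{1..rj}. u k \<in> M"
    and "\<forall>k\<in>{1..ri}. \<forall>k'\<in>{1..ri}. k < k' \<longrightarrow> w k i < w k' i" and "\<forall>k\<in>{1..ri}. w k i < z i"
    and "\<forall>k\<in>{1..rj}. \<forall>k'\<in>{1..rj}. k < k' \<longrightarrow> u k j < u k' j" and "\<forall>k\<in>{1..rj}. u k j < z j"
    and "\<forall>k\<in>{1..rj}. \<forall>k'\<in>{1..ri}. u k j < w k' j"
    by (elim exE conjE) assumption
  then show thesis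
    by (intro that[of z w u]) (auto simp: strict_mono_on_def)
qed

lemma P2'_points_below:
  assumes "dot_array r d M" and "P2' r d M"
    and "i \<in> {1..d}" and "j \<in> {1..d}" and "i \<noteq> j" and "c \<le> r"
  obtains Q where "Q \<subseteq> M" and "finite Q" and "card Q = c"
    and "\<forall>q\<in>Q. q j < c" and "inj_on (\<lambda>q. q j) Q"
proof -
  obtain z u where "z \<in> M" and uM: "u ` {1..r} \<subseteq> M"
    and mono: "strict_mono_on {1..r} (\<lambda>k. u k j)" and below_z: "\<forall>k\<in>{1..r}. u k j < z j"
    using P2'E[OF assms(2-5), of 0 r] by auto
  have "z j \<le> r"
    using dot_array_coordinate_le[OF assms(1) \<open>z \<in> M\<close> assms(4)] .
  \<comment> \<open>\<open>r\<close> strictly increasing values below \<open>z j \<le> r\<close> force \<open>u k j = k - 1\<close>\<close>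
  have u_below: "u k j < c" if "k \<in> {1..c}" for k
  proof -
    have "u k j + (r - k) \<le> u r j"
      using strict_mono_on_nat_gap[OF mono, of k r] that assms(6) by auto
    moreover have "u r j < z j"
      using below_z that assms(6) by auto
    ultimately show ?thesis
      using \<open>z j \<le> r\<close> that by auto
  qed
  have "inj_on (\<lambda>k. u k j) {1..c}"
    using assms(6) by (intro strict_mono_on_imp_inj_on monotone_on_subset[OF mono]) auto
  then have "inj_on ((\<lambda>q. q j) \<circ> u) {1..c}"
    by (simp add: comp_def)
  then show thesis
    using uM assms(6) u_below
    by (intro that[of "u ` {1..c}"]) (auto simp: card_image inj_on_imageI inj_on_imageI2)
qed

lemma P2'_points_above:
  assumes "dot_array r d M" and "P2' r d M"
    and "i \<in> {1..d}" and "j \<in> {1..d}" and "i \<noteq> j" and "c \<le> r"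
  obtains V where "V \<subseteq> M" and "finite V" and "card V = r - c"
    and "\<forall>v\<in>V. c < v j" and "inj_on (\<lambda>v. v i) V"
proof (cases "c = r")
  case True
  then show thesis by (intro that[of "{}"]) auto
next
  case False
  then have split: "(r - c - 1) + (c + 1) = r"
    using assms(6) by simp
  obtain z w u where "z \<in> M" and wM: "w ` {1..r-c-1} \<subseteq> M" and "u ` {1..c+1} \<subseteq> M"
    and w_mono: "strict_mono_on {1..r-c-1} (\<lambda>k. w k i)" and w_below: "\<forall>k\<in>{1..r-c-1}. w k i < z i"
    and u_mono: "strict_mono_on {1..c+1} (\<lambda>k. u k j)" and u_below_z: "\<forall>k\<in>{1..c+1}. u k j < z j"
    and u_below_w: "\<forall>k\<in>{1..c+1}. \<forall>k'\<in>{1..r-c-1}. u k j < w k' j"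
    using P2'E[OF assms(2-5) split] .
  define W where "W = w ` {1..r-c-1}"
  have "c \<le> u (c + 1) j"
    using strict_mono_on_nat_gap[OF u_mono, of 1 "c + 1"] by simp
  moreover have "u (c + 1) j < z j" and "\<forall>k'\<in>{1..r-c-1}. u (c + 1) j < w k' j"
    using u_below_z u_below_w by auto
  ultimately have above: "\<forall>v\<in>insert z W. c < v j"
    unfolding W_def by auto
  have "inj_on ((\<lambda>v. v i) \<circ> w) {1..r-c-1}"
    using strict_mono_on_imp_inj_on[OF w_mono] by (simp add: comp_def)
  then have "inj_on (\<lambda>v. v i) W" and "card W = r - c - 1"
    unfolding W_def by (auto simp: card_image inj_on_imageI inj_on_imageI2)
  moreover have "z i \<notin> (\<lambda>v. v i) ` W"
    using w_below unfolding W_def by fastforce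
  moreover have "finite W"
    unfolding W_def by simp
  ultimately have "inj_on (\<lambda>v. v i) (insert z W)" and "card (insert z W) = r - c"
    using False assms(6) by (auto simp: image_iff)
  then show thesis
    using \<open>z \<in> M\<close> wM above by (intro that[of "insert z W"]) (auto simp: W_def)
qed

definition min_attained_twice :: "(nat \<Rightarrow> nat) set \<Rightarrow> nat \<Rightarrow> bool" where
  "min_attained_twice S k \<longleftrightarrow> (\<exists>p\<in>S. \<exists>q\<in>S. p \<noteq> q \<and> p k = q k \<and> (\<forall>s\<in>S. p k \<le> s k))"

lemma min_attained_twice_not_inj_on:
  "min_attained_twice S k \<Longrightarrow> \<not> inj_on (\<lambda>p. p k) S"
  unfolding min_attained_twice_def inj_on_def by blast

lemma P3E:
  assumes "P3 r d M" and "S \<subseteq> M" and "finite S" and "card S = r + 2"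
  obtains S' where "S' \<subseteq> S" and "\<forall>k\<in>{1..d}. min_attained_twice S' k"
proof -
  obtain S' where "S' \<subseteq> S" and ties: "\<forall>k\<in>{1..d}. \<exists>a\<in>S'. \<exists>b\<in>S'. a \<noteq> b \<and>
      a k = Min ((\<lambda>x. x k) ` S') \<and> b k = Min ((\<lambda>x. x k) ` S')"
    using assms(1)[unfolded P3_def, rule_format, OF conjI[OF assms(2) conjI[OF assms(3,4)]]]
    by blast
  have "finite S'"
    using assms(3) \<open>S' \<subseteq> S\<close> finite_subset by blast
  then have "min_attained_twice S' k" if "k \<in> {1..d}" for k
    using ties that unfolding min_attained_twice_def by fastforce
  then show thesis
    using \<open>S' \<subseteq> S\<close> that by blast
qed

lemma min_attained_twice_forces_pair:
  assumes "S \<subseteq> insert x (insert y (Q \<union> V))"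
    and "min_attained_twice S j" and "min_attained_twice S i"
    and "\<forall>q\<in>Q. q j < c" and "inj_on (\<lambda>q. q j) Q"
    and "\<forall>v\<in>V. c < v j" and "inj_on (\<lambda>v. v i) V"
    and "x j = c" and "y j = c"
  shows "y \<in> S" and "S \<subseteq> insert x (insert y V)"
proof -
  obtain p q where "p \<in> S" "q \<in> S" "p \<noteq> q" "p j = q j" and p_min: "\<forall>s\<in>S. p j \<le> s j"
    using assms(2) unfolding min_attained_twice_def by blast
  have "\<not> p j < c"
  proof
    assume "p j < c"
    then have "p \<in> Q" "q \<in> Q"
      using assms(1,6,8,9) \<open>p \<in> S\<close> \<open>q \<in> S\<close> \<open>p j = q j\<close> by fastforce+
    then show False
      using assms(5) \<open>p \<noteq> q\<close> \<open>p j = q j\<close> by (auto dest: inj_onD)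
  qed
  moreover have "\<not> c < p j"
  proof
    assume "c < p j"
    then have "S \<subseteq> V"
      using assms(1,4,8,9) p_min by fastforce
    then show False
      using min_attained_twice_not_inj_on[OF assms(3)] inj_on_subset[OF assms(7)] by blast
  qed
  ultimately have "p j = c"
    by simp
  then have "S \<subseteq> insert x (insert y V)"
    using assms(1,4) p_min by fastforce
  moreover have "p \<in> {x, y}" "q \<in> {x, y}"
    using calculation assms(6) \<open>p \<in> S\<close> \<open>q \<in> S\<close> \<open>p j = c\<close> \<open>p j = q j\<close> by fastforce+
  ultimately show "y \<in> S" "S \<subseteq> insert x (insert y V)"
    using \<open>p \<in> S\<close> \<open>q \<in> S\<close> \<open>p \<noteq> q\<close> by auto
qed

lemma min_attained_twice_witness:
  assumes "S \<subseteq> insert x (insert y V)" and "y \<in> S" and "y i < x i"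
    and "min_attained_twice S i" and "inj_on (\<lambda>v. v i) V"
  shows "\<exists>v\<in>V. v i = y i"
proof -
  obtain p q where "p \<in> S" "q \<in> S" "p \<noteq> q" "p i = q i" and p_min: "\<forall>s\<in>S. p i \<le> s i"
    using assms(4) unfolding min_attained_twice_def by blast
  have "p i \<le> y i"
    using p_min assms(2) by blast
  then have "p \<in> insert y V" "q \<in> insert y V"
    using assms(1,3) \<open>p \<in> S\<close> \<open>q \<in> S\<close> \<open>p i = q i\<close> by auto
  moreover have "\<not> (p \<in> V \<and> q \<in> V)"
    using assms(5) \<open>p \<noteq> q\<close> \<open>p i = q i\<close> by (auto dest: inj_onD)
  ultimately show ?thesis
    using \<open>p \<noteq> q\<close> \<open>p i = q i\<close> by auto
qed

theorem mainTheorem12: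
  fixes r d :: nat and M :: "(nat \<Rightarrow> nat) set" and x y :: "nat \<Rightarrow> nat" and i j :: nat
  assumes "dot_array r d M" and "P2' r d M" and "P3 r d M"
    and "x \<in> M" and "y \<in> M"
    and "i \<in> {1..d}" and "j \<in> {1..d}" and "i \<noteq> j"
    and "x i > y i" and "x j = y j"
  shows "\<exists>b\<in>M. b i = y i \<and> b j > y j"
proof -
  define c where "c = y j"
  have "c \<le> r"
    unfolding c_def using dot_array_coordinate_le[OF assms(1,5,7)] .
  obtain Q where "Q \<subseteq> M" "finite Q" "card Q = c" and Q_below: "\<forall>q\<in>Q. q j < c"
    and Q_inj: "inj_on (\<lambda>q. q j) Q"
    using P2'_points_below[OF assms(1,2,6-8) \<open>c \<le> r\<close>] .
  obtain V where "V \<subseteq> M" "finite V" "card V = r - c" and V_above: "\<forall>v\<in>V. c < v j"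
    and V_inj: "inj_on (\<lambda>v. v i) V"
    using P2'_points_above[OF assms(1,2,6-8) \<open>c \<le> r\<close>] .
  define S where "S = insert x (insert y (Q \<union> V))"
  have "x \<noteq> y" "x \<notin> Q \<union> V" "y \<notin> Q \<union> V" "Q \<inter> V = {}"
    using assms(9,10) Q_below V_above unfolding c_def by fastforce+
  then have "card S = r + 2"
    unfolding S_def using \<open>finite Q\<close> \<open>finite V\<close> \<open>card Q = c\<close> \<open>card V = r - c\<close> \<open>c \<le> r\<close>
    by (simp add: card_Un_disjoint)
  moreover have "S \<subseteq> M" "finite S"
    unfolding S_def using assms(4,5) \<open>Q \<subseteq> M\<close> \<open>V \<subseteq> M\<close> \<open>finite Q\<close> \<open>finite V\<close> by auto
  ultimately obtain S' where "S' \<subseteq> S" and ties: "\<forall>k\<in>{1..d}. min_attained_twice S' k"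
    using P3E[OF assms(3)] by blast
  then have "y \<in> S'" and "S' \<subseteq> insert x (insert y V)"
    using min_attained_twice_forces_pair[of S' x y Q V j i c] assms(6,7,10) Q_below Q_inj V_above V_inj
    unfolding S_def c_def by auto
  then obtain v where "v \<in> V" "v i = y i"
    using min_attained_twice_witness[of S' x y V i] assms(6,9) ties V_inj by blast
  then show ?thesis
    using \<open>V \<subseteq> M\<close> V_above unfolding c_def by blast
qed

end
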